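(* The jump operator $\Gamma_{\mathscr{TP}}$ is monotone: for all pairs of pairs $(T,P)$, $(T',P')$ of subsets of $\omega$, if $(T,P)\le(T',P')$ then $\Gamma_{\mathscr{TP}}(T,P)\le\Gamma_{\mathscr{TP}}(T',P')$.
   Context: Language. Let $\mathcal L_{\mathbb N}$ be the language of first-order Peano arithmetic and $\mathcal L=\mathcal L_{\mathbb N}\cup\{\mathrm T,\mathrm P\}$ with unary predicates $\mathrm T,\mathrm P$. $\mathcal L$-formulas are in Tait style: literals are $s=t$, $s\neq t$, $\mathrm Tt$, $\neg\mathrm Tt$, $\mathrm Pt$, $\neg\mathrm Pt$; formulas are built from literals by $\wedge,\vee,\forall,\exists$; negation of an arbitrary formula is defined by De Morgan dualities with $\neg\neg\varphi:=\varphi$. A standard Gödel numbering is fixed; $\#e$ is the code of $e$, $\ulcorner e\urcorner$ the numeral of $\#e$, $\mathrm{val}(t)$ the value of a closed term $t$, $\dot\neg$ the primitive recursive function with $\dot\neg(\#\varphi)=\#\neg\varphi$; $\mathrm T\varphi,\mathrm P\varphi$ abbreviate $\mathrm T\ulcorner\varphi\urcorner,\mathrm P\ulcorner\varphi\urcorner$. Semantics. A partial model is $(\mathbb N,T,P)$ with $\mathbb N$ the standard model and $T=(T^+,T^-)$, $P=(P^+,P^-)$ pairs of subsets of $\omega$. Strong Kleene satisfaction $\models_{SK}$: arithmetic literals evaluated in $\mathbb N$; $\mathrm Tt$ satisfied iff $\mathrm{val}(t)\in T^+$, $\neg\mathrm Tt$ iff $\mathrm{val}(t)\in T^-$, likewise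 for $\mathrm P$ with $P^\pm$; conjunction iff both, disjunction iff at least one, $\forall x\varphi(x)$ iff all numeral instances, $\exists x\varphi(x)$ iff some numeral instance. Base paradoxicality. $\mathrm{PA}[\mathrm{SK}]$ is the two-sided sequent calculus for Strong Kleene logic with identity in $\mathcal L$ (initial sequents $\varphi\Rightarrow\varphi$, cut, weakening, the rule from $\Gamma\Rightarrow\Delta,\varphi$ infer $\neg\varphi,\Gamma\Rightarrow\Delta$, usual rules for $\wedge,\vee,\forall,\exists$, reflexivity $\Rightarrow t=t$, replacement from $\Gamma\Rightarrow\Delta,\varphi(t)$ infer $\Gamma\Rightarrow\Delta,s\neq t,\varphi(s)$) plus the initial sequents of Peano arithmetic and the induction rule for all $\mathcal L$-formulas. A sentence $\varphi$ is base paradoxical iff $\mathrm{PA}[\mathrm{SK}]$ derives $\varphi\Leftrightarrow\neg\mathrm T\varphi$ and $\neg\varphi\Leftrightarrow\mathrm T\varphi$. $B(x)$ is an $\mathcal L_{\mathbb N}$-formula defining in $\mathbb N$ the set of codes of base paradoxical sentences, and $\Pi(x):=B(x)\vee B(\dot\neg x)$. Jump. Let $\mathscr P(x)$ be the $\mathcal L$-formula which is the disjunction of: (1) $x$ codes a sentence and $\Pi(x)$; (2) $x$ codes a sentence $\mathrm Tt$ ($t$ a closed term) and $\mathrm P(\mathrm{val}(t))$; (3) $x$ codes a sentence $\neg\mathrm Tt$ and $\mathrm P(\mathrm{val}(t))$; (4) $x$ codes a sentence $\psi\wedge\theta$ and $(\mathrm P\psi\wedge\mathrm P\theta)\vee(\mathrm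 T\psi\wedge\mathrm P\theta)\vee(\mathrm T\theta\wedge\mathrm P\psi)$; (5) $x$ codes a sentence $\psi\vee\theta$ and $(\mathrm P\psi\wedge\mathrm P\theta)\vee(\neg\mathrm T\psi\wedge\mathrm P\theta)\vee(\neg\mathrm T\theta\wedge\mathrm P\psi)$; (6) $x$ codes a sentence $\forall v\psi$ and $\exists y\,\mathrm P\psi(\dot y)\wedge\forall y(\mathrm P\psi(\dot y)\vee\mathrm T\psi(\dot y))$; (7) $x$ codes a sentence $\exists v\psi$ and $\exists y\,\mathrm P\psi(\dot y)\wedge\forall y(\mathrm P\psi(\dot y)\vee\neg\mathrm T\psi(\dot y))$; here $\psi(\dot y)$ is the code of the result of substituting the numeral of $y$ for $v$. Write $\mathscr P(\varphi)$ for $\mathscr P(\ulcorner\varphi\urcorner)$. Define $\Gamma_{\mathscr{TP}}(T,P)=\big((\{\#\varphi:(\mathbb N,T,P)\models_{SK}\varphi\},\{\#\varphi:(\mathbb N,T,P)\models_{SK}\neg\varphi\}),(\{\#\varphi:(\mathbb N,T,P)\models_{SK}\mathscr P(\varphi)\},\{\#\varphi:(\mathbb N,T,P)\models_{SK}\varphi\vee\neg\varphi\})\big)$, $\varphi$ ranging over $\mathcal L$-sentences. Order: $(X,Y)\le(X',Y')$ iff $X\subseteq X'$ and $Y\subseteq Y'$; $(T,P)\le(T',P')$ iff $T\le T'$ and $P\le P'$. *)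

theory Defs
  imports Main "HOL-Library.Countable" "HOL-Library.Product_Order"
begin

section \<open>Syntax of L = L_N + {T, P} (Tait style, de Bruijn variables)\<close>

datatype tm = Var nat | Zero | Sc tm | Pl tm tm | Tms tm tm

datatype fm =
    Eq tm tm | Neq tm tm
  | Tr tm | NTr tm
  | Pr tm | NPr tm
  | Conj fm fm | Disj fm fm
  | All fm | Ex fm

instance tm :: countable by countable_datatype
instance fm :: countable by countable_datatype

primrec neg :: "fm \<Rightarrow> fm" where
  "neg (Eq s t) = Neq s t"
| "neg (Neq s t) = Eq s t"
| "neg (Tr t) = NTr t"
| "neg (NTr t) = Tr t"
| "neg (Pr t) = NPr t"
| "neg (NPr t) = Pr t"
| "neg (Conj a b) = Disj (neg a) (neg b)"
| "neg (Disj a b) = Conj (neg a) (neg b)"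
| "neg (All a) = Ex (neg a)"
| "neg (Ex a) = All (neg a)"

primrec tsubst :: "(nat \<Rightarrow> tm) \<Rightarrow> tm \<Rightarrow> tm" where
  "tsubst \<sigma> (Var n) = \<sigma> n"
| "tsubst \<sigma> Zero = Zero"
| "tsubst \<sigma> (Sc t) = Sc (tsubst \<sigma> t)"
| "tsubst \<sigma> (Pl s t) = Pl (tsubst \<sigma> s) (tsubst \<sigma> t)"
| "tsubst \<sigma> (Tms s t) = Tms (tsubst \<sigma> s) (tsubst \<sigma> t)"

definition liftt :: "tm \<Rightarrow> tm" where
  "liftt = tsubst (\<lambda>n. Var (Suc n))"

definition upS :: "(nat \<Rightarrow> tm) \<Rightarrow> nat \<Rightarrow> tm" where
  "upS \<sigma> = (\<lambda>n. case n of 0 \<Rightarrow> Var 0 | Suc m \<Rightarrow> liftt (\<sigma> m))"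

primrec fsubst :: "(nat \<Rightarrow> tm) \<Rightarrow> fm \<Rightarrow> fm" where
  "fsubst \<sigma> (Eq s t) = Eq (tsubst \<sigma> s) (tsubst \<sigma> t)"
| "fsubst \<sigma> (Neq s t) = Neq (tsubst \<sigma> s) (tsubst \<sigma> t)"
| "fsubst \<sigma> (Tr t) = Tr (tsubst \<sigma> t)"
| "fsubst \<sigma> (NTr t) = NTr (tsubst \<sigma> t)"
| "fsubst \<sigma> (Pr t) = Pr (tsubst \<sigma> t)"
| "fsubst \<sigma> (NPr t) = NPr (tsubst \<sigma> t)"
| "fsubst \<sigma> (Conj a b) = Conj (fsubst \<sigma> a) (fsubst \<sigma> b)"
| "fsubst \<sigma> (Disj a b) = Disj (fsubst \<sigma> a) (fsubst \<sigma> b)"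
| "fsubst \<sigma> (All a) = All (fsubst (upS \<sigma>) a)"
| "fsubst \<sigma> (Ex a) = Ex (fsubst (upS \<sigma>) a)"

definition inst :: "fm \<Rightarrow> tm \<Rightarrow> fm" where
  "inst \<phi> t = fsubst (\<lambda>n. case n of 0 \<Rightarrow> t | Suc m \<Rightarrow> Var m) \<phi>"

definition liftf :: "fm \<Rightarrow> fm" where
  "liftf = fsubst (\<lambda>n. Var (Suc n))"

primrec fvt :: "tm \<Rightarrow> nat set" where
  "fvt (Var n) = {n}"
| "fvt Zero = {}"
| "fvt (Sc t) = fvt t"
| "fvt (Pl s t) = fvt s \<union> fvt t"
| "fvt (Tms s t) = fvt s \<union> fvt t"

primrec fvf :: "fm \<Rightarrow> nat set" where
  "fvf (Eq s t) = fvt s \<union> fvt t"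
| "fvf (Neq s t) = fvt s \<union> fvt t"
| "fvf (Tr t) = fvt t"
| "fvf (NTr t) = fvt t"
| "fvf (Pr t) = fvt t"
| "fvf (NPr t) = fvt t"
| "fvf (Conj a b) = fvf a \<union> fvf b"
| "fvf (Disj a b) = fvf a \<union> fvf b"
| "fvf (All a) = {n. Suc n \<in> fvf a}"
| "fvf (Ex a) = {n. Suc n \<in> fvf a}"

definition sentence :: "fm \<Rightarrow> bool" where
  "sentence \<phi> \<longleftrightarrow> fvf \<phi> = {}"

primrec val :: "tm \<Rightarrow> nat" where
  "val (Var n) = 0"
| "val Zero = 0"
| "val (Sc t) = Suc (val t)"
| "val (Pl s t) = val s + val t"
| "val (Tms s t) = val s * val t"

primrec num :: "nat \<Rightarrow> tm" where
  "num 0 = Zero"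
| "num (Suc n) = Sc (num n)"

definition gn :: "fm \<Rightarrow> nat" where
  "gn = to_nat"

definition quote :: "fm \<Rightarrow> tm" where
  "quote \<phi> = num (gn \<phi>)"

section \<open>Strong Kleene satisfaction in partial models (N, T, P)\<close>

primrec deg :: "fm \<Rightarrow> nat" where
  "deg (Eq s t) = 0"
| "deg (Neq s t) = 0"
| "deg (Tr t) = 0"
| "deg (NTr t) = 0"
| "deg (Pr t) = 0"
| "deg (NPr t) = 0"
| "deg (Conj a b) = Suc (deg a + deg b)"
| "deg (Disj a b) = Suc (deg a + deg b)"
| "deg (All a) = Suc (deg a)"
| "deg (Ex a) = Suc (deg a)"

lemma deg_fsubst: "deg (fsubst \<sigma> \<phi>) = deg \<phi>"
  by (induction \<phi> arbitrary: \<sigma>) auto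

function sk :: "nat set \<times> nat set \<Rightarrow> nat set \<times> nat set \<Rightarrow> fm \<Rightarrow> bool" where
  "sk T P (Eq s t) = (val s = val t)"
| "sk T P (Neq s t) = (val s \<noteq> val t)"
| "sk T P (Tr t) = (val t \<in> fst T)"
| "sk T P (NTr t) = (val t \<in> snd T)"
| "sk T P (Pr t) = (val t \<in> fst P)"
| "sk T P (NPr t) = (val t \<in> snd P)"
| "sk T P (Conj a b) = (sk T P a \<and> sk T P b)"
| "sk T P (Disj a b) = (sk T P a \<or> sk T P b)"
| "sk T P (All a) = (\<forall>n. sk T P (inst a (num n)))"
| "sk T P (Ex a) = (\<exists>n. sk T P (inst a (num n)))"
  by pat_completeness auto
termination
  by (relation "measure (\<lambda>(T, P, \<phi>). deg \<phi>)") (auto simp: inst_def deg_fsubst)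

inductive deriv :: "fm list \<Rightarrow> fm list \<Rightarrow> bool" where
  ax: "deriv [\<phi>] [\<phi>]"
| cut: "deriv \<Gamma> (\<Delta> @ [\<phi>]) \<Longrightarrow> deriv (\<phi> # \<Gamma>) \<Delta> \<Longrightarrow> deriv \<Gamma> \<Delta>"
| weak: "deriv \<Gamma> \<Delta> \<Longrightarrow> set \<Gamma> \<subseteq> set \<Gamma>' \<Longrightarrow> set \<Delta> \<subseteq> set \<Delta>' \<Longrightarrow> deriv \<Gamma>' \<Delta>'"
| negL: "deriv \<Gamma> (\<Delta> @ [\<phi>]) \<Longrightarrow> deriv (neg \<phi> # \<Gamma>) \<Delta>"
| conjL1: "deriv (\<phi> # \<Gamma>) \<Delta> \<Longrightarrow> deriv (Conj \<phi> \<psi> # \<Gamma>) \<Delta>"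
| conjL2: "deriv (\<psi> # \<Gamma>) \<Delta> \<Longrightarrow> deriv (Conj \<phi> \<psi> # \<Gamma>) \<Delta>"
| conjR: "deriv \<Gamma> (\<Delta> @ [\<phi>]) \<Longrightarrow> deriv \<Gamma> (\<Delta> @ [\<psi>]) \<Longrightarrow> deriv \<Gamma> (\<Delta> @ [Conj \<phi> \<psi>])"
| disjL: "deriv (\<phi> # \<Gamma>) \<Delta> \<Longrightarrow> deriv (\<psi> # \<Gamma>) \<Delta> \<Longrightarrow> deriv (Disj \<phi> \<psi> # \<Gamma>) \<Delta>"
| disjR1: "deriv \<Gamma> (\<Delta> @ [\<phi>]) \<Longrightarrow> deriv \<Gamma> (\<Delta> @ [Disj \<phi> \<psi>])"
| disjR2: "deriv \<Gamma> (\<Delta> @ [\<psi>]) \<Longrightarrow> deriv \<Gamma> (\<Delta> @ [Disj \<phi> \<psi>])"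
| allL: "deriv (inst \<phi> t # \<Gamma>) \<Delta> \<Longrightarrow> deriv (All \<phi> # \<Gamma>) \<Delta>"
| allR: "deriv (map liftf \<Gamma>) (map liftf \<Delta> @ [\<phi>]) \<Longrightarrow> deriv \<Gamma> (\<Delta> @ [All \<phi>])"
| exL: "deriv (\<phi> # map liftf \<Gamma>) (map liftf \<Delta>) \<Longrightarrow> deriv (Ex \<phi> # \<Gamma>) \<Delta>"
| exR: "deriv \<Gamma> (\<Delta> @ [inst \<phi> t]) \<Longrightarrow> deriv \<Gamma> (\<Delta> @ [Ex \<phi>])"
| refl: "deriv [] [Eq t t]"
| repl: "deriv \<Gamma> (\<Delta> @ [inst \<phi> t]) \<Longrightarrow> deriv \<Gamma> (\<Delta> @ [Neq s t, inst \<phi> s])"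
| pa_zero: "deriv [] [Neq (Sc s) Zero]"
| pa_suc: "deriv [Eq (Sc s) (Sc t)] [Eq s t]"
| pa_plus0: "deriv [] [Eq (Pl s Zero) s]"
| pa_plusS: "deriv [] [Eq (Pl s (Sc t)) (Sc (Pl s t))]"
| pa_times0: "deriv [] [Eq (Tms s Zero) Zero]"
| pa_timesS: "deriv [] [Eq (Tms s (Sc t)) (Pl (Tms s t) s)]"
| ind: "deriv (\<phi> # map liftf \<Gamma>)
           (map liftf \<Delta> @ [fsubst (\<lambda>n. if n = 0 then Sc (Var 0) else Var n) \<phi>])
       \<Longrightarrow> deriv (inst \<phi> Zero # \<Gamma>) (\<Delta> @ [inst \<phi> t])"

definition base_paradoxical :: "fm \<Rightarrow> bool" where
  "base_paradoxical \<phi> \<longleftrightarrow> sentence \<phi>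
     \<and> deriv [\<phi>] [NTr (quote \<phi>)] \<and> deriv [NTr (quote \<phi>)] [\<phi>]
     \<and> deriv [neg \<phi>] [Tr (quote \<phi>)] \<and> deriv [Tr (quote \<phi>)] [neg \<phi>]"

definition Bset :: "nat set" where
  "Bset = {gn \<phi> | \<phi>. base_paradoxical \<phi>}"

definition Pi_holds :: "fm \<Rightarrow> bool" where
  "Pi_holds \<phi> \<longleftrightarrow> gn \<phi> \<in> Bset \<or> gn (neg \<phi>) \<in> Bset"

section \<open>SK satisfaction of the formula calP(phi) (clauses (1)-(7)) for a sentence phi\<close>

definition calP_sat :: "nat set \<times> nat set \<Rightarrow> nat set \<times> nat set \<Rightarrow> fm \<Rightarrow> bool" where
  "calP_sat T P \<phi> \<longleftrightarrow>
     (sentence \<phi> \<and> Pi_holds \<phi>)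
   \<or> (\<exists>t. sentence \<phi> \<and> \<phi> = Tr t \<and> val t \<in> fst P)
   \<or> (\<exists>t. sentence \<phi> \<and> \<phi> = NTr t \<and> val t \<in> fst P)
   \<or> (\<exists>\<psi> \<theta>. sentence \<phi> \<and> \<phi> = Conj \<psi> \<theta> \<and>
        ((gn \<psi> \<in> fst P \<and> gn \<theta> \<in> fst P) \<or> (gn \<psi> \<in> fst T \<and> gn \<theta> \<in> fst P)
         \<or> (gn \<theta> \<in> fst T \<and> gn \<psi> \<in> fst P)))
   \<or> (\<exists>\<psi> \<theta>. sentence \<phi> \<and> \<phi> = Disj \<psi> \<theta> \<and>
        ((gn \<psi> \<in> fst P \<and> gn \<theta> \<in> fst P) \<or> (gn \<psi> \<in> snd T \<and> gn \<theta> \<in> fst P)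
         \<or> (gn \<theta> \<in> snd T \<and> gn \<psi> \<in> fst P)))
   \<or> (\<exists>\<psi>. sentence \<phi> \<and> \<phi> = All \<psi> \<and>
        (\<exists>y. gn (inst \<psi> (num y)) \<in> fst P) \<and>
        (\<forall>y. gn (inst \<psi> (num y)) \<in> fst P \<or> gn (inst \<psi> (num y)) \<in> fst T))
   \<or> (\<exists>\<psi>. sentence \<phi> \<and> \<phi> = Ex \<psi> \<and>
        (\<exists>y. gn (inst \<psi> (num y)) \<in> fst P) \<and>
        (\<forall>y. gn (inst \<psi> (num y)) \<in> fst P \<or> gn (inst \<psi> (num y)) \<in> snd T))"

definition jumpTP :: "nat set \<times> nat set \<Rightarrow> nat set \<times> nat set
    \<Rightarrow> (nat set \<times> nat set) \<times> (nat set \<times> nat set)" where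
  "jumpTP T P =
    (({gn \<phi> | \<phi>. sentence \<phi> \<and> sk T P \<phi>},
      {gn \<phi> | \<phi>. sentence \<phi> \<and> sk T P (neg \<phi>)}),
     ({gn \<phi> | \<phi>. sentence \<phi> \<and> calP_sat T P \<phi>},
      {gn \<phi> | \<phi>. sentence \<phi> \<and> sk T P (Disj \<phi> (neg \<phi>))}))"

end

theory Submission
  imports Defs
begin

text \<open>Every clause of Strong Kleene satisfaction and of the formula calP reads T and P
  only through membership in one of their components, never through its complement, and
  the order on pairs is componentwise; so enlarging T and P can only add sentences to each
  of the four sets produced by the jump.\<close>

lemma sk_mono:
  assumes "sk T P \<phi>" and "T \<le> T'" and "P \<le> P'"
  shows "sk T' P' \<phi>"
  using assms by (induction T P \<phi> rule: sk.induct) (auto simp: less_eq_prod_def)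

lemma calP_sat_mono:
  assumes "calP_sat T P \<phi>" and "T \<le> T'" and "P \<le> P'"
  shows "calP_sat T' P' \<phi>"
proof -
  have "fst T \<subseteq> fst T'" "snd T \<subseteq> snd T'" "fst P \<subseteq> fst P'"
    using assms(2,3) by (auto simp: less_eq_prod_def)
  with assms(1) show ?thesis
    unfolding calP_sat_def by (elim disjE; fastforce)
qed

lemma sentence_codes_mono:
  assumes "\<And>\<phi>. sentence \<phi> \<Longrightarrow> Q \<phi> \<Longrightarrow> Q' \<phi>"
  shows "{gn \<phi> | \<phi>. sentence \<phi> \<and> Q \<phi>} \<subseteq> {gn \<phi> | \<phi>. sentence \<phi> \<and> Q' \<phi>}"
  using assms by blast

theorem mainTheorem3:
  fixes T P T' P' :: "nat set \<times> nat set"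
  assumes "(T, P) \<le> (T', P')"
  shows "jumpTP T P \<le> jumpTP T' P'"
proof -
  have T: "T \<le> T'" and P: "P \<le> P'"
    using assms by (simp_all add: less_eq_prod_def)
  note sk = sk_mono[OF _ T P] and calP = calP_sat_mono[OF _ T P]
  show ?thesis
    unfolding jumpTP_def less_eq_prod_def fst_conv snd_conv
    by (intro conjI sentence_codes_mono sk calP)
qed

end
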